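(* Let $K$ be a field and $m,n,r$ positive integers. Let $R=K[x_{ij}^k \mid 1\le i\le m,\ 1\le j\le n,\ 1\le k\le r]$ and let $I_{mn}^r$ be the ideal generated by all $2$-minors of the horizontal concatenation $H=(X_1\ \cdots\ X_r)$ and all $2$-minors of the vertical concatenation $V$ of the $m\times n$ matrices $X_k=(x_{ij}^k)$. Fix a diagonal term order, and let $\Delta$ be the simplicial complex whose Stanley–Reisner ideal is $\operatorname{in}(I_{mn}^r)$. Then there is a bijection between the set of facets of $\Delta$ and the set of words on the multiset $\{M^{m-1},N^{n-1},R^{r-1}\}$ (i.e. words containing exactly $m-1$ letters $M$, $n-1$ letters $N$ and $r-1$ letters $R$).
   Context: A term order is diagonal if the leading term of every $2$-minor of $H$ and of $V$ is the product of the entries on its main diagonal. *)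

theory Defs
  imports Complex_Main "HOL-Library.Poly_Mapping"
begin

text \<open>Variables x_{ij}^k are encoded as triples (i,j,k) :: nat \<times> nat \<times> nat.\<close>

type_synonym var = "nat \<times> nat \<times> nat"
type_synonym mon = "var \<Rightarrow>\<^sub>0 nat"
type_synonym 'a mpoly = "mon \<Rightarrow>\<^sub>0 'a"

definition varset :: "nat \<Rightarrow> nat \<Rightarrow> nat \<Rightarrow> var set" where
  "varset m n r = {(i,j,k). 1 \<le> i \<and> i \<le> m \<and> 1 \<le> j \<and> j \<le> n \<and> 1 \<le> k \<and> k \<le> r}"

definition ring_R :: "nat \<Rightarrow> nat \<Rightarrow> nat \<Rightarrow> ('a::field) mpoly set" where
  "ring_R m n r = {f :: 'a mpoly. \<forall>t \<in> Poly_Mapping.keys f. Poly_Mapping.keys t \<subseteq> varset m n r}"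

inductive_set ideal_gen :: "('a::field) mpoly set \<Rightarrow> 'a mpoly set \<Rightarrow> 'a mpoly set"
  for S G where
  zero: "0 \<in> ideal_gen S G"
| gen: "g \<in> G \<Longrightarrow> g \<in> ideal_gen S G"
| add: "f \<in> ideal_gen S G \<Longrightarrow> h \<in> ideal_gen S G \<Longrightarrow> f + h \<in> ideal_gen S G"
| mult: "f \<in> ideal_gen S G \<Longrightarrow> q \<in> S \<Longrightarrow> q * f \<in> ideal_gen S G"

definition var_mon :: "var \<Rightarrow> mon" where
  "var_mon v = Poly_Mapping.single v 1"

definition diag_mon :: "(nat \<Rightarrow> nat \<Rightarrow> var) \<Rightarrow> nat \<Rightarrow> nat \<Rightarrow> nat \<Rightarrow> nat \<Rightarrow> mon" where
  "diag_mon X a b c d = var_mon (X a c) + var_mon (X b d)"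

definition antidiag_mon :: "(nat \<Rightarrow> nat \<Rightarrow> var) \<Rightarrow> nat \<Rightarrow> nat \<Rightarrow> nat \<Rightarrow> nat \<Rightarrow> mon" where
  "antidiag_mon X a b c d = var_mon (X a d) + var_mon (X b c)"

definition minor2 :: "(nat \<Rightarrow> nat \<Rightarrow> var) \<Rightarrow> nat \<Rightarrow> nat \<Rightarrow> nat \<Rightarrow> nat \<Rightarrow> ('a::field) mpoly" where
  "minor2 X a b c d = Poly_Mapping.single (diag_mon X a b c d) 1
                     - Poly_Mapping.single (antidiag_mon X a b c d) 1"

definition minor_idx :: "nat \<Rightarrow> nat \<Rightarrow> (nat \<times> nat \<times> nat \<times> nat) set" where
  "minor_idx p q = {(a,b,c,d). 1 \<le> a \<and> a < b \<and> b \<le> p \<and> 1 \<le> c \<and> c < d \<and> d \<le> q}"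

text \<open>H = (X_1 ... X_r), an m \<times> (n r) matrix; column (k-1)n + j holds column j of X_k.\<close>
definition Hmat :: "nat \<Rightarrow> nat \<Rightarrow> nat \<Rightarrow> nat \<Rightarrow> nat \<Rightarrow> var" where
  "Hmat m n r i c = (i, (c - 1) mod n + 1, (c - 1) div n + 1)"

text \<open>V = vertical concatenation of X_1,...,X_r, an (m r) \<times> n matrix; row (k-1)m + i holds row i of X_k.\<close>
definition Vmat :: "nat \<Rightarrow> nat \<Rightarrow> nat \<Rightarrow> nat \<Rightarrow> nat \<Rightarrow> var" where
  "Vmat m n r s j = ((s - 1) mod m + 1, j, (s - 1) div m + 1)"

definition minors_H :: "nat \<Rightarrow> nat \<Rightarrow> nat \<Rightarrow> ('a::field) mpoly set" where
  "minors_H m n r = {minor2 (Hmat m n r) a b c d | a b c d. (a,b,c,d) \<in> minor_idx m (n*r)}"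

definition minors_V :: "nat \<Rightarrow> nat \<Rightarrow> nat \<Rightarrow> ('a::field) mpoly set" where
  "minors_V m n r = {minor2 (Vmat m n r) a b c d | a b c d. (a,b,c,d) \<in> minor_idx (m*r) n}"

definition I_mnr :: "nat \<Rightarrow> nat \<Rightarrow> nat \<Rightarrow> ('a::field) mpoly set" where
  "I_mnr m n r = ideal_gen (ring_R m n r) (minors_H m n r \<union> minors_V m n r)"

definition term_order :: "(mon \<Rightarrow> mon \<Rightarrow> bool) \<Rightarrow> bool" where
  "term_order le \<longleftrightarrow>
     (\<forall>s. le s s) \<and> (\<forall>s t. le s t \<and> le t s \<longrightarrow> s = t) \<and>
     (\<forall>s t u. le s t \<and> le t u \<longrightarrow> le s u) \<and> (\<forall>s t. le s t \<or> le t s) \<and>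
     wfP (\<lambda>s t. le s t \<and> s \<noteq> t) \<and>
     (\<forall>t. le 0 t) \<and> (\<forall>s t u. le s t \<longrightarrow> le (s + u) (t + u))"

definition lead_mon :: "(mon \<Rightarrow> mon \<Rightarrow> bool) \<Rightarrow> ('a::zero) mpoly \<Rightarrow> mon" where
  "lead_mon le f = (THE t. t \<in> Poly_Mapping.keys f \<and> (\<forall>s \<in> Poly_Mapping.keys f. le s t))"

definition diagonal_order :: "nat \<Rightarrow> nat \<Rightarrow> nat \<Rightarrow> (mon \<Rightarrow> mon \<Rightarrow> bool) \<Rightarrow> bool" where
  "diagonal_order m n r le \<longleftrightarrow>
     (\<forall>(a,b,c,d) \<in> minor_idx m (n*r).
        lead_mon le (minor2 (Hmat m n r) a b c d :: rat mpoly) = diag_mon (Hmat m n r) a b c d) \<and>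
     (\<forall>(a,b,c,d) \<in> minor_idx (m*r) n.
        lead_mon le (minor2 (Vmat m n r) a b c d :: rat mpoly) = diag_mon (Vmat m n r) a b c d)"

definition init_mons :: "nat \<Rightarrow> nat \<Rightarrow> nat \<Rightarrow> (mon \<Rightarrow> mon \<Rightarrow> bool) \<Rightarrow> ('a::field) mpoly set \<Rightarrow> mon set" where
  "init_mons m n r le I = {t. Poly_Mapping.keys t \<subseteq> varset m n r \<and>
       (\<exists>f \<in> I. f \<noteq> 0 \<and> (\<exists>u. t = lead_mon le f + u))}"

definition sqfree_mon :: "var set \<Rightarrow> mon" where
  "sqfree_mon F = (\<Sum>v\<in>F. var_mon v)"

definition SR_complex :: "nat \<Rightarrow> nat \<Rightarrow> nat \<Rightarrow> (mon \<Rightarrow> mon \<Rightarrow> bool) \<Rightarrow> ('a::field) mpoly set \<Rightarrow> var set set" where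
  "SR_complex m n r le I = {F. F \<subseteq> varset m n r \<and> sqfree_mon F \<notin> init_mons m n r le I}"

definition facets :: "'v set set \<Rightarrow> 'v set set" where
  "facets D = {F \<in> D. \<forall>G \<in> D. F \<subseteq> G \<longrightarrow> G = F}"

datatype letter = LM | LN | LR

definition words :: "nat \<Rightarrow> nat \<Rightarrow> nat \<Rightarrow> letter list set" where
  "words m n r = {w. count_list w LM = m - 1 \<and> count_list w LN = n - 1 \<and> count_list w LR = r - 1}"

end

theory Submission
  imports Defs "HOL-Library.Multiset"
begin

text \<open>Call two variables a diagonal pair if their product is the leading term of a 2-minor of \<open>H\<close>
  or \<open>V\<close>. The faces of \<open>\<Delta>\<close> are exactly the sets of variables without diagonal pair. If \<open>F\<close>
  contains a diagonal pair, its squarefree monomial is a multiple of such a leading term. Conversely,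
  grade monomials by the multisets of their row, column and layer indices. Both terms of a 2-minor
  have the same degree, so for every \<open>f\<close> in the ideal the coefficients of \<open>f\<close> in each degree sum
  to zero. Replacing a diagonal pair by the corresponding antidiagonal lowers a monomial without
  changing its degree, and a monomial without diagonal pair is determined by its degree; so it is
  the least monomial of its degree and cannot be the leading monomial of an element of the ideal.

  A set without diagonal pair meets each layer in an antichain of the \<open>m \<times> n\<close> grid, and its part
  in a higher layer lies weakly north-west of its parts in lower layers. The maximal such sets
  therefore consist of one staircase per layer, made of \<open>M\<close>-steps (one row down) and \<open>N\<close>-steps
  (one column left), with \<open>m - 1\<close> and \<open>n - 1\<close> steps altogether; writing the \<open>r\<close> staircases one
  after another, separated by \<open>R\<close>, gives the words.\<close>

abbreviation row :: "var \<Rightarrow> nat" where "row p \<equiv> fst p"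
abbreviation col :: "var \<Rightarrow> nat" where "col p \<equiv> fst (snd p)"
abbreviation layer :: "var \<Rightarrow> nat" where "layer p \<equiv> snd (snd p)"

text \<open>The variables \<open>p\<close>, \<open>q\<close> form the main diagonal of a 2-minor of \<open>H\<close> (first disjunct)
  or of \<open>V\<close> (second disjunct).\<close>
definition diag_pair :: "var \<Rightarrow> var \<Rightarrow> bool" where
  "diag_pair p q \<longleftrightarrow>
     (row p < row q \<and> (layer p < layer q \<or> layer p = layer q \<and> col p < col q)) \<or>
     ((layer p < layer q \<or> layer p = layer q \<and> row p < row q) \<and> col p < col q)"

lemma diag_pair_simp [simp]:
  "diag_pair (i,j,k) (i',j',k') \<longleftrightarrow>
     (i < i' \<and> (k < k' \<or> k = k' \<and> j < j')) \<or> ((k < k' \<or> k = k' \<and> i < i') \<and> j < j')"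
  by (simp add: diag_pair_def)

lemma not_diag_pair_refl: "\<not> diag_pair p p"
  by (simp add: diag_pair_def)

definition diag_free :: "var set \<Rightarrow> bool" where
  "diag_free F \<longleftrightarrow> (\<forall>p\<in>F. \<forall>q\<in>F. \<not> diag_pair p q)"

lemma diag_free_subset: "diag_free F \<Longrightarrow> G \<subseteq> F \<Longrightarrow> diag_free G"
  unfolding diag_free_def by blast

lemma diag_free_layer_less:
  "diag_free F \<Longrightarrow> p \<in> F \<Longrightarrow> q \<in> F \<Longrightarrow> layer p < layer q \<Longrightarrow> row q \<le> row p \<and> col q \<le> col p"
  unfolding diag_free_def diag_pair_def by force

lemma diag_free_same_layer:
  "diag_free F \<Longrightarrow> p \<in> F \<Longrightarrow> q \<in> F \<Longrightarrow> layer p = layer q \<Longrightarrow> \<not> (row p < row q \<and> col p < col q)"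
  unfolding diag_free_def diag_pair_def by force

definition diag_free_sets :: "nat \<Rightarrow> nat \<Rightarrow> nat \<Rightarrow> var set set" where
  "diag_free_sets m n r = {F. F \<subseteq> varset m n r \<and> diag_free F}"

lemma varset_eq: "varset m n r = {1..m} \<times> {1..n} \<times> {1..r}"
  by (auto simp: varset_def)

lemma finite_varset: "finite (varset m n r)"
  by (simp add: varset_eq)

section \<open>Staircases\<close>

abbreviation nM :: "letter list \<Rightarrow> nat" where "nM s \<equiv> count_list s LM"
abbreviation nN :: "letter list \<Rightarrow> nat" where "nN s \<equiv> count_list s LN"

fun staircase :: "letter list \<Rightarrow> nat \<Rightarrow> nat \<Rightarrow> (nat \<times> nat) set" where
  "staircase [] i j = {(i,j)}"
| "staircase (LM # s) i j = insert (i,j) (staircase s (Suc i) j)"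
| "staircase (LN # s) i j = insert (i,j) (staircase s i (j - 1))"
| "staircase (LR # s) i j = insert (i,j) (staircase s i j)"

lemma staircase_bounds:
  "(x,y) \<in> staircase s i j \<Longrightarrow> i \<le> x \<and> x \<le> i + nM s \<and> y \<le> j \<and> j \<le> y + nN s"
  by (induction s i j rule: staircase.induct) fastforce+

lemma start_in_staircase: "(i,j) \<in> staircase s i j"
  by (cases "(s, i, j)" rule: staircase.cases) auto

lemma finite_staircase: "finite (staircase s i j)"
  by (induction s i j rule: staircase.induct) auto

lemma card_staircase: "LR \<notin> set s \<Longrightarrow> nN s \<le> j \<Longrightarrow> card (staircase s i j) = length s + 1"
proof (induction s i j rule: staircase.induct)
  case (2 s i j)
  have "(i,j) \<notin> staircase s (Suc i) j" using staircase_bounds by fastforce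
  with 2 show ?case by (simp add: finite_staircase)
next
  case (3 s i j)
  have "(i,j) \<notin> staircase s i (j - 1)" using 3 staircase_bounds by fastforce
  with 3 show ?case by (simp add: finite_staircase)
qed auto

definition antichain2 :: "(nat \<times> nat) set \<Rightarrow> bool" where
  "antichain2 S \<longleftrightarrow> (\<forall>p\<in>S. \<forall>q\<in>S. \<not> (fst p < fst q \<and> snd p < snd q))"

lemma antichain2_staircase: "antichain2 (staircase s i j)"
proof (induction s i j rule: staircase.induct)
  case (2 s i j)
  then show ?case by (fastforce simp: antichain2_def dest: staircase_bounds)
next
  case (3 s i j)
  then show ?case by (fastforce simp: antichain2_def dest: staircase_bounds)
next
  case (4 s i j)
  then show ?case by (fastforce simp: antichain2_def dest: staircase_bounds)
qed (simp add: antichain2_def)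

lemma Suc_in_staircase_iff:
  assumes "LR \<notin> set s" "nN s \<le> j"
  shows "(Suc i, j) \<in> staircase s i j \<longleftrightarrow> (\<exists>u. s = LM # u)"
proof (cases "(s, i, j)" rule: staircase.cases)
  case (3 u i' j')
  then have "1 \<le> j" using assms(2) by simp
  then have "(Suc i, j) \<notin> staircase u i (j - 1)"
    using staircase_bounds[of "Suc i" j u i "j - 1"] by auto
  with 3 show ?thesis by auto
qed (use assms in \<open>auto simp: start_in_staircase\<close>)

lemma staircase_inj:
  "LR \<notin> set s \<Longrightarrow> LR \<notin> set s' \<Longrightarrow> nN s \<le> j \<Longrightarrow> nN s' \<le> j \<Longrightarrow>
   staircase s i j = staircase s' i j \<Longrightarrow> s = s'"
proof (induction s i j arbitrary: s' rule: staircase.induct)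
  case (1 i j)
  then have "length s' + 1 = card {(i,j)}" using card_staircase[of s' j i] by simp
  then show ?case by simp
next
  case (2 s i j)
  obtain u where s': "s' = LM # u"
    using "2.prems" Suc_in_staircase_iff[of "LM # s" j i] Suc_in_staircase_iff[of s' j i] by auto
  have "(i,j) \<notin> staircase v (Suc i) j" for v using staircase_bounds by fastforce
  then have "staircase s (Suc i) j = staircase u (Suc i) j"
    using "2.prems"(5) s' by (metis insert_ident staircase.simps(2))
  with "2.IH" "2.prems" s' show ?case by simp
next
  case (3 s i j)
  obtain u where s': "s' = LN # u"
    using "3.prems" Suc_in_staircase_iff[of "LN # s" j i] Suc_in_staircase_iff[of s' j i]
      card_staircase[of "LN # s" j i] card_staircase[of s' j i]
    by (cases "(s', i, j)" rule: staircase.cases) auto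
  have "(i,j) \<notin> staircase v i (j - 1)" for v using "3.prems" staircase_bounds by fastforce
  then have "staircase s i (j - 1) = staircase u i (j - 1)"
    using "3.prems"(5) s' by (metis insert_ident staircase.simps(3))
  with "3.IH" "3.prems" s' show ?case by simp
qed simp

lemma antichain2_box_step:
  assumes anti: "antichain2 S" and box: "S \<subseteq> {i0..i1} \<times> {j1..j0}" 
    and le: "i0 \<le> i1" "j1 \<le> j0" and ne: "(i0, j0) \<noteq> (i1, j1)"
  shows "(i0 < i1 \<and> S - {(i0,j0)} \<subseteq> {Suc i0..i1} \<times> {j1..j0}) \<or>
         (j1 < j0 \<and> S - {(i0,j0)} \<subseteq> {i0..i1} \<times> {j1..j0 - 1})"
proof (cases "\<exists>x>i0. (x, j0) \<in> S")
  case True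
  then obtain x where x: "i0 < x" "(x, j0) \<in> S" by blast
  have "x' \<noteq> i0" if "(x', y) \<in> S" "(x', y) \<noteq> (i0, j0)" for x' y
  proof
    assume "x' = i0"
    with that box have "y < j0" by auto
    with anti x that \<open>x' = i0\<close> show False unfolding antichain2_def by fastforce
  qed
  then have "S - {(i0,j0)} \<subseteq> {Suc i0..i1} \<times> {j1..j0}"
    using box by (fastforce simp: Suc_le_eq)
  moreover have "i0 < i1" using x box by auto
  ultimately show ?thesis by blast
next
  case False
  have not_j0: "y \<noteq> j0" if "(x, y) \<in> S" "(x, y) \<noteq> (i0, j0)" for x y
  proof
    assume "y = j0"
    with that box have "i0 < x" by fastforce
    with False that \<open>y = j0\<close> show False by blast
  qed
  then have rest: "S - {(i0,j0)} \<subseteq> {i0..i1} \<times> {j1..j0 - 1}"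
    using box by fastforce
  show ?thesis
  proof (cases "j1 < j0")
    case True
    with rest show ?thesis by blast
  next
    case False
    with not_j0 box have "S - {(i0,j0)} = {}" by fastforce
    with ne le False show ?thesis by auto
  qed
qed

lemma staircase_through:
  assumes "antichain2 S" "S \<subseteq> {i0..i1} \<times> {j1..j0}" "i0 \<le> i1" "j1 \<le> j0"
  shows "\<exists>s. LR \<notin> set s \<and> nM s = i1 - i0 \<and> nN s = j0 - j1 \<and> S \<subseteq> staircase s i0 j0"
  using assms
proof (induction "i1 - i0 + (j0 - j1)" arbitrary: i0 j0 S)
  case 0
  then have "S \<subseteq> {(i0,j0)}" by auto
  then show ?case using 0 by (intro exI[of _ "[]"]) auto
next
  case (Suc d)
  have anti': "antichain2 (S - {(i0,j0)})" using Suc.prems(1) by (auto simp: antichain2_def)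
  from antichain2_box_step[OF Suc.prems] Suc.hyps(2)
  consider "i0 < i1" "S - {(i0,j0)} \<subseteq> {Suc i0..i1} \<times> {j1..j0}"
    | "j1 < j0" "S - {(i0,j0)} \<subseteq> {i0..i1} \<times> {j1..j0 - 1}"
    by fastforce
  then show ?case
  proof cases
    case 1
    have "d = i1 - Suc i0 + (j0 - j1)" using Suc.hyps(2) 1 by simp
    from Suc.hyps(1)[OF this anti' 1(2)] 1(1) Suc.prems(4) obtain s where
      "LR \<notin> set s" "nM s = i1 - Suc i0" "nN s = j0 - j1" "S - {(i0,j0)} \<subseteq> staircase s (Suc i0) j0"
      by (auto simp: Suc_le_eq)
    with 1 show ?thesis by (intro exI[of _ "LM # s"]) auto
  next
    case 2
    have "d = i1 - i0 + (j0 - 1 - j1)" using Suc.hyps(2) 2 by simp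
    moreover have "j1 \<le> j0 - 1" using 2 by simp
    ultimately obtain s where
      "LR \<notin> set s" "nM s = i1 - i0" "nN s = j0 - 1 - j1" "S - {(i0,j0)} \<subseteq> staircase s i0 (j0 - 1)"
      using Suc.hyps(1)[OF _ anti' 2(2) Suc.prems(3)] by blast
    with 2 show ?thesis by (intro exI[of _ "LN # s"]) auto
  qed
qed

abbreviation totM :: "letter list list \<Rightarrow> nat" where "totM ss \<equiv> sum_list (map nM ss)"
abbreviation totN :: "letter list list \<Rightarrow> nat" where "totN ss \<equiv> sum_list (map nN ss)"

text \<open>The staircase in layer \<open>k\<close> runs from \<open>(m - nM s, n)\<close> to \<open>(m, n - nN s)\<close>; the later
  layers continue inside the box \<open>[1, m - nM s] \<times> [1, n - nN s]\<close>.\<close>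
fun stairs :: "nat \<Rightarrow> nat \<Rightarrow> nat \<Rightarrow> letter list list \<Rightarrow> var set" where
  "stairs m n k [] = {}"
| "stairs m n k (s # ss) =
     (\<lambda>(i,j). (i,j,k)) ` staircase s (m - nM s) n \<union> stairs (m - nM s) (n - nN s) (Suc k) ss"

lemma layer_stairs: "p \<in> stairs m n k ss \<Longrightarrow> k \<le> layer p \<and> layer p < k + length ss"
  by (induction ss arbitrary: m n k) fastforce+

lemma stairs_layer_eq: "{(i,j). (i,j,k) \<in> stairs m n k (s # ss)} = staircase s (m - nM s) n"
  by (fastforce dest: layer_stairs)

lemma stairs_other_layers:
  "{p \<in> stairs m n k (s # ss). layer p \<noteq> k} = stairs (m - nM s) (n - nN s) (Suc k) ss"
  by (fastforce dest: layer_stairs)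

lemma staircase_subset_box:
  "nM s \<le> m \<Longrightarrow> nN s < n \<Longrightarrow> staircase s (m - nM s) n \<subseteq> {m - nM s..m} \<times> {n - nN s..n}"
  by (auto dest: staircase_bounds)

lemma stairs_subset_box:
  "totM ss < m \<Longrightarrow> totN ss < n \<Longrightarrow> stairs m n k ss \<subseteq> {1..m} \<times> {1..n} \<times> {k..<k + length ss}"
proof (induction ss arbitrary: m n k)
  case (Cons s ss)
  have "totM ss < m - nM s" "totN ss < n - nN s" using Cons.prems by auto
  note IH = Cons.IH[OF this, of "Suc k"]
  have "staircase s (m - nM s) n \<subseteq> {1..m} \<times> {1..n}"
    using staircase_subset_box[of s m n] Cons.prems by fastforce
  with IH show ?case by (fastforce simp: subset_iff)
qed simp

lemma finite_stairs: "finite (stairs m n k ss)"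
  by (induction ss arbitrary: m n k) (auto simp: finite_staircase)

lemma diag_free_Un:
  "diag_free (A \<union> B) \<longleftrightarrow>
     diag_free A \<and> diag_free B \<and> (\<forall>p\<in>A. \<forall>q\<in>B. \<not> diag_pair p q \<and> \<not> diag_pair q p)"
  unfolding diag_free_def by blast

lemma diag_free_layer_image: "antichain2 S \<Longrightarrow> diag_free ((\<lambda>(i,j). (i,j,k)) ` S)"
  unfolding antichain2_def diag_free_def by fastforce

lemma diag_free_stairs: "totM ss < m \<Longrightarrow> totN ss < n \<Longrightarrow> diag_free (stairs m n k ss)"
proof (induction ss arbitrary: m n k)
  case Nil
  then show ?case by (simp add: diag_free_def)
next
  case (Cons s ss)
  have bounds: "totM ss < m - nM s" "totN ss < n - nN s" using Cons.prems by auto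
  have "\<not> diag_pair p q \<and> \<not> diag_pair q p"
    if "p \<in> (\<lambda>(i,j). (i,j,k)) ` staircase s (m - nM s) n"
      and "q \<in> stairs (m - nM s) (n - nN s) (Suc k) ss" for p q
  proof -
    have "m - nM s \<le> row p" "n - nN s \<le> col p" "layer p = k"
      using that(1) staircase_subset_box[of s m n] Cons.prems by auto
    moreover have "row q \<le> m - nM s" "col q \<le> n - nN s" "Suc k \<le> layer q"
      using that(2) stairs_subset_box[OF bounds] by fastforce+
    ultimately show ?thesis unfolding diag_pair_def by auto
  qed
  then show ?case
    using Cons.IH[OF bounds] by (simp add: diag_free_Un diag_free_layer_image antichain2_staircase)
qed

lemma card_stairs:
  "\<forall>s\<in>set ss. LR \<notin> set s \<Longrightarrow> totM ss < m \<Longrightarrow> totN ss < n \<Longrightarrow>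
   card (stairs m n k ss) = sum_list (map (\<lambda>s. length s + 1) ss)"
proof (induction ss arbitrary: m n k)
  case (Cons s ss)
  have bounds: "totM ss < m - nM s" "totN ss < n - nN s" using Cons.prems by auto
  let ?B = "(\<lambda>(i,j). (i,j,k)) ` staircase s (m - nM s) n"
  have "?B \<inter> stairs (m - nM s) (n - nN s) (Suc k) ss = {}"
    using layer_stairs by fastforce
  moreover have "card ?B = length s + 1"
    using Cons.prems by (subst card_image) (auto simp: inj_on_def card_staircase)
  ultimately show ?case
    using Cons.IH[OF _ bounds] Cons.prems by (simp add: card_Un_disjoint finite_stairs finite_staircase)
qed simp

lemma diag_free_layer_split:
  assumes free: "diag_free F" and box: "F \<subseteq> {1..m} \<times> {1..n} \<times> {k..<Suc k + r}"
    and "1 \<le> m" "1 \<le> n"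
  obtains a b where "1 \<le> a" "a \<le> m" "1 \<le> b" "b \<le> n"
    "{(i,j). (i,j,k) \<in> F} \<subseteq> {a..m} \<times> {b..n}"
    "{p \<in> F. layer p \<noteq> k} \<subseteq> {1..a} \<times> {1..b} \<times> {Suc k..<Suc k + r}"
    "r = 0 \<Longrightarrow> a = 1 \<and> b = 1"
proof (cases "r = 0")
  case True
  then have "{p \<in> F. layer p \<noteq> k} = {}" using box by fastforce
  moreover have "{(i,j). (i,j,k) \<in> F} \<subseteq> {1..m} \<times> {1..n}" using box by auto
  ultimately show ?thesis by (intro that[of 1 1]) (use assms in auto)
next
  case False
  define B where "B = {(i,j). (i,j,k) \<in> F}"
  define a where "a = Min (insert m (fst ` B))"
  define b where "b = Min (insert n (snd ` B))"
  have B_box: "B \<subseteq> {1..m} \<times> {1..n}" using box by (auto simp: B_def)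
  then have "finite B" by (rule finite_subset) simp
  then have fin: "finite (fst ` B)" "finite (snd ` B)" by simp_all
  have "a \<le> x" "b \<le> y" if "(x,y) \<in> B" for x y
    unfolding a_def b_def using fin that by (force intro: Min_le)+
  with B_box have "B \<subseteq> {a..m} \<times> {b..n}" by auto
  moreover have "a \<le> m" "b \<le> n" unfolding a_def b_def using fin by simp_all
  moreover have "1 \<le> a" "1 \<le> b" unfolding a_def b_def using fin B_box assms(3,4) by auto
  moreover have "{p \<in> F. layer p \<noteq> k} \<subseteq> {1..a} \<times> {1..b} \<times> {Suc k..<Suc k + r}"
  proof
    fix p assume p: "p \<in> {p \<in> F. layer p \<noteq> k}"
    obtain i j k' where pe: "p = (i,j,k')" by (cases p)
    with p have q: "(i,j,k') \<in> F" "k' \<noteq> k" by auto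
    then have bd: "1 \<le> i" "i \<le> m" "1 \<le> j" "j \<le> n" "k < k'" "k' < Suc k + r" using box by auto
    have "i \<le> x \<and> j \<le> y" if "(x,y) \<in> B" for x y
      using diag_free_layer_less[OF free _ q(1), of "(x,y,k)"] that bd by (auto simp: B_def)
    then have "i \<le> a" "j \<le> b" unfolding a_def b_def using fin bd by auto
    with bd pe show "p \<in> {1..a} \<times> {1..b} \<times> {Suc k..<Suc k + r}" by auto
  qed
  ultimately show ?thesis using that False by (simp add: B_def)
qed

definition layer_words :: "nat \<Rightarrow> nat \<Rightarrow> nat \<Rightarrow> letter list list set" where
  "layer_words m n r =
     {ss. length ss = r \<and> (\<forall>s\<in>set ss. LR \<notin> set s) \<and> totM ss = m - 1 \<and> totN ss = n - 1}"


lemma antichain2_layer: "diag_free F \<Longrightarrow> antichain2 {(i,j). (i,j,k) \<in> F}"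
  using diag_free_same_layer[of F] unfolding antichain2_def by fastforce

lemma stairs_through:
  "diag_free F \<Longrightarrow> F \<subseteq> {1..m} \<times> {1..n} \<times> {k..<k + r} \<Longrightarrow> 1 \<le> m \<Longrightarrow> 1 \<le> n \<Longrightarrow> 1 \<le> r \<Longrightarrow>
   \<exists>ss\<in>layer_words m n r. F \<subseteq> stairs m n k ss"
proof (induction r arbitrary: m n k F)
  case (Suc r)
  have box: "F \<subseteq> {1..m} \<times> {1..n} \<times> {k..<Suc k + r}" using Suc.prems(2) by simp
  obtain a b where ab: "1 \<le> a" "a \<le> m" "1 \<le> b" "b \<le> n"
    and B: "{(i,j). (i,j,k) \<in> F} \<subseteq> {a..m} \<times> {b..n}"
    and R: "{p \<in> F. layer p \<noteq> k} \<subseteq> {1..a} \<times> {1..b} \<times> {Suc k..<Suc k + r}"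
    and r0: "r = 0 \<Longrightarrow> a = 1 \<and> b = 1"
    by (rule diag_free_layer_split[OF Suc.prems(1) box Suc.prems(3,4)]) (rule that)
  obtain ss where ss: "ss \<in> layer_words a b r" "{p \<in> F. layer p \<noteq> k} \<subseteq> stairs a b (Suc k) ss"
  proof (cases "r = 0")
    case True
    with R r0 have "[] \<in> layer_words a b r" "{p \<in> F. layer p \<noteq> k} \<subseteq> stairs a b (Suc k) []"
      by (auto simp: layer_words_def)
    then show ?thesis by (rule that)
  next
    case False
    have "diag_free {p \<in> F. layer p \<noteq> k}" by (rule diag_free_subset[OF Suc.prems(1)]) blast
    from Suc.IH[OF this R ab(1,3)] False obtain ss where
      "ss \<in> layer_words a b r" "{p \<in> F. layer p \<noteq> k} \<subseteq> stairs a b (Suc k) ss"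
      by auto
    then show ?thesis by (rule that)
  qed
  from staircase_through[OF antichain2_layer[OF Suc.prems(1)] B ab(2,4)] obtain s where
    s: "LR \<notin> set s" "nM s = m - a" "nN s = n - b" "{(i,j). (i,j,k) \<in> F} \<subseteq> staircase s a n"
    by blast
  have start: "m - nM s = a" "n - nN s = b" using s ab by auto
  have "F \<subseteq> stairs m n k (s # ss)"
  proof
    fix p assume p: "p \<in> F"
    show "p \<in> stairs m n k (s # ss)"
    proof (cases "layer p = k")
      case True
      then have "(row p, col p) \<in> staircase s a n" using s(4) p by force
      with True start show ?thesis by (force simp: image_iff)
    next
      case False
      with ss(2) p start show ?thesis by auto
    qed
  qed
  moreover have "s # ss \<in> layer_words m n (Suc r)"
    using ss(1) s ab by (auto simp: layer_words_def)
  ultimately show ?case by blast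
qed simp

lemma stairs_inj:
  "\<forall>s\<in>set ss. LR \<notin> set s \<Longrightarrow> \<forall>s\<in>set ss'. LR \<notin> set s \<Longrightarrow>
   totM ss < m \<Longrightarrow> totN ss < n \<Longrightarrow> totM ss' < m \<Longrightarrow> totN ss' < n \<Longrightarrow>
   length ss = length ss' \<Longrightarrow> stairs m n k ss = stairs m n k ss' \<Longrightarrow> ss = ss'"
proof (induction ss arbitrary: ss' m n k)
  case (Cons s ss)
  obtain s' ts where ss': "ss' = s' # ts" using Cons.prems(7) by (cases ss') auto
  have "{(i,j). (i,j,k) \<in> stairs m n k (s # ss)} = {(i,j). (i,j,k) \<in> stairs m n k (s' # ts)}"
    using Cons.prems(8) ss' by (simp del: stairs.simps)
  then have eq: "staircase s (m - nM s) n = staircase s' (m - nM s') n"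
    unfolding stairs_layer_eq .
  have "(m - nM s, n) \<in> staircase s' (m - nM s') n" "(m - nM s', n) \<in> staircase s (m - nM s) n"
    using eq start_in_staircase[of "m - nM s" n s] start_in_staircase[of "m - nM s'" n s'] by simp_all
  then have "m - nM s' \<le> m - nM s" "m - nM s \<le> m - nM s'" by (auto dest: staircase_bounds)
  moreover have "nM s < m" "nM s' < m" using Cons.prems(3,5) ss' by auto
  ultimately have "nM s = nM s'" by linarith
  with eq Cons.prems ss' have "s = s'"
    by (intro staircase_inj[of s s' n "m - nM s"]) auto
  have "{p \<in> stairs m n k (s # ss). layer p \<noteq> k} = {p \<in> stairs m n k (s' # ts). layer p \<noteq> k}"
    using Cons.prems(8) ss' by (simp del: stairs.simps)
  with \<open>s = s'\<close> have "stairs (m - nM s) (n - nN s) (Suc k) ss = stairs (m - nM s) (n - nN s) (Suc k) ts"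
    unfolding stairs_other_layers by simp
  have "ss = ts"
  proof (rule Cons.IH)
    show "\<forall>s\<in>set ss. LR \<notin> set s" using Cons.prems(1) by simp
    show "\<forall>s\<in>set ts. LR \<notin> set s" using Cons.prems(2) ss' by simp
    show "totM ss < m - nM s" "totN ss < n - nN s" using Cons.prems(3,4) by simp_all
    show "totM ts < m - nM s" "totN ts < n - nN s" using Cons.prems(5,6) ss' \<open>s = s'\<close> by simp_all
    show "length ss = length ts" using Cons.prems(7) ss' by simp
  qed fact
  with ss' \<open>s = s'\<close> show ?case by simp
qed simp

lemma facets_eq_image:
  assumes in_D: "\<And>x. x \<in> X \<Longrightarrow> P x \<in> D"
    and fin: "\<And>x. x \<in> X \<Longrightarrow> finite (P x)"
    and card: "\<And>x. x \<in> X \<Longrightarrow> card (P x) = c"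
    and cover: "\<And>F. F \<in> D \<Longrightarrow> \<exists>x\<in>X. F \<subseteq> P x"
  shows "facets D = P ` X"
proof
  show "facets D \<subseteq> P ` X"
  proof
    fix F assume "F \<in> facets D"
    then have F: "F \<in> D" and max: "\<And>G. G \<in> D \<Longrightarrow> F \<subseteq> G \<Longrightarrow> G = F"
      by (auto simp: facets_def)
    obtain x where x: "x \<in> X" "F \<subseteq> P x" using cover[OF F] by blast
    with max[OF in_D[OF x(1)] x(2)] show "F \<in> P ` X" by blast
  qed
next
  show "P ` X \<subseteq> facets D"
  proof
    fix F assume "F \<in> P ` X"
    then obtain x where x: "x \<in> X" "F = P x" by blast
    have "G = F" if G: "G \<in> D" "F \<subseteq> G" for G
    proof -
      obtain y where y: "y \<in> X" "G \<subseteq> P y" using cover[OF G(1)] by blast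
      have sub: "F \<subseteq> P y" using G(2) y(2) by (rule order.trans)
      have "card F = card (P y)" using card[OF x(1)] card[OF y(1)] x(2) by simp
      with sub have "F = P y" by (rule card_subset_eq[OF fin[OF y(1)]])
      with G(2) y(2) show ?thesis by blast
    qed
    with x in_D show "F \<in> facets D" by (auto simp: facets_def)
  qed
qed


lemma length_eq_nM_nN: "LR \<notin> set s \<Longrightarrow> length s = nM s + nN s"
proof (induction s)
  case (Cons a s)
  then show ?case by (cases a) auto
qed simp


lemma card_stairs_layer_words:
  assumes "ss \<in> layer_words m n r" "1 \<le> m" "1 \<le> n"
  shows "card (stairs m n k ss) = (m - 1) + (n - 1) + r"
proof -
  have "card (stairs m n k ss) = sum_list (map (\<lambda>s. nM s + nN s + 1) ss)"
    using assms card_stairs[of ss m n k] length_eq_nM_nN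
    by (auto simp: layer_words_def intro!: arg_cong[where f = sum_list])
  also have "\<dots> = totM ss + totN ss + length ss"
    by (induction ss) auto
  finally show ?thesis using assms(1) by (simp add: layer_words_def)
qed

lemma stairs_in_diag_free_sets:
  assumes "ss \<in> layer_words m n r" "1 \<le> m" "1 \<le> n"
  shows "stairs m n 1 ss \<in> diag_free_sets m n r"
proof -
  have "totM ss < m" "totN ss < n" using assms by (auto simp: layer_words_def)
  then show ?thesis
    using stairs_subset_box[of ss m n 1] diag_free_stairs assms(1)
    by (auto simp: diag_free_sets_def varset_eq layer_words_def)
qed

lemma bij_betw_stairs_facets:
  assumes "1 \<le> m" "1 \<le> n" "1 \<le> r"
  shows "bij_betw (stairs m n 1) (layer_words m n r) (facets (diag_free_sets m n r))"
proof (rule bij_betw_imageI)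
  show "inj_on (stairs m n 1) (layer_words m n r)"
    using assms by (intro inj_onI stairs_inj) (auto simp: layer_words_def)
  show "stairs m n 1 ` layer_words m n r = facets (diag_free_sets m n r)"
  proof (rule facets_eq_image[symmetric])
    fix ss assume ss: "ss \<in> layer_words m n r"
    show "stairs m n 1 ss \<in> diag_free_sets m n r" by (rule stairs_in_diag_free_sets[OF ss assms(1,2)])
    show "finite (stairs m n 1 ss)" by (rule finite_stairs)
    show "card (stairs m n 1 ss) = (m - 1) + (n - 1) + r" by (rule card_stairs_layer_words[OF ss assms(1,2)])
  next
    fix F assume "F \<in> diag_free_sets m n r"
    with assms show "\<exists>ss\<in>layer_words m n r. F \<subseteq> stairs m n 1 ss"
      by (intro stairs_through) (auto simp: diag_free_sets_def varset_eq)
  qed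
qed

fun join_R :: "letter list list \<Rightarrow> letter list" where
  "join_R [] = []"
| "join_R [s] = s"
| "join_R (s # t # ss) = s @ LR # join_R (t # ss)"

fun split_R :: "letter list \<Rightarrow> letter list list" where
  "split_R [] = [[]]"
| "split_R (x # w) =
     (if x = LR then [] # split_R w
      else (case split_R w of [] \<Rightarrow> [[x]] | s # ss \<Rightarrow> (x # s) # ss))"

lemma join_R_Cons_Cons: "join_R ((x # s) # ss) = x # join_R (s # ss)"
  by (cases ss) auto

lemma count_join_R: "y \<noteq> LR \<Longrightarrow> count_list (join_R ss) y = sum_list (map (\<lambda>s. count_list s y) ss)"
  by (induction ss rule: join_R.induct) auto

lemma count_LR_join_R:
  "\<forall>s\<in>set ss. LR \<notin> set s \<Longrightarrow> ss \<noteq> [] \<Longrightarrow> count_list (join_R ss) LR = length ss - 1"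
  by (induction ss rule: join_R.induct) (auto simp: count_list_0_iff)

lemma split_R:
  "split_R w \<noteq> [] \<and> join_R (split_R w) = w \<and> (\<forall>s\<in>set (split_R w). LR \<notin> set s) \<and>
   length (split_R w) = count_list w LR + 1 \<and> totM (split_R w) = nM w \<and> totN (split_R w) = nN w"
proof (induction w)
  case (Cons x w)
  show ?case
  proof (cases "x = LR")
    case True
    with Cons show ?thesis by (cases "split_R w") auto
  next
    case False
    with Cons obtain s ss where "split_R w = s # ss" by (cases "split_R w") auto
    with Cons False show ?thesis by (cases x) (auto simp: join_R_Cons_Cons)
  qed
qed simp


lemma append_LR_eq:
  "LR \<notin> set s \<Longrightarrow> LR \<notin> set s' \<Longrightarrow> s @ LR # x = s' @ LR # y \<Longrightarrow> s = s' \<and> x = y"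
proof (induction s arbitrary: s')
  case Nil
  then show ?case by (cases s') auto
next
  case (Cons a s)
  then show ?case by (cases s') auto
qed


lemma join_R_inj:
  "\<forall>s\<in>set ss. LR \<notin> set s \<Longrightarrow> \<forall>s\<in>set ss'. LR \<notin> set s \<Longrightarrow> length ss = length ss' \<Longrightarrow>
   join_R ss = join_R ss' \<Longrightarrow> ss = ss'"
proof (induction ss arbitrary: ss' rule: join_R.induct)
  case (2 s)
  obtain s' where "ss' = [s']"
    using "2.prems"(3) by (cases ss' rule: join_R.cases) simp_all
  with 2 show ?case by simp
next
  case (3 s t ss)
  obtain s' t' us where ss': "ss' = s' # t' # us"
    using "3.prems"(3) by (cases ss' rule: join_R.cases) simp_all
  have "s @ LR # join_R (t # ss) = s' @ LR # join_R (t' # us)"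
    using "3.prems"(4) ss' by simp
  then have "s = s' \<and> join_R (t # ss) = join_R (t' # us)"
    by (rule append_LR_eq[rotated 2]) (use "3.prems" ss' in simp_all)
  moreover have "t # ss = t' # us" if "join_R (t # ss) = join_R (t' # us)"
    using "3.IH"[of "t' # us"] "3.prems" ss' that by simp
  ultimately show ?case using ss' by simp
qed simp


lemma bij_betw_join_R: "1 \<le> r \<Longrightarrow> bij_betw join_R (layer_words m n r) (words m n r)"
proof (rule bij_betw_imageI)
  show "inj_on join_R (layer_words m n r)"
    by (rule inj_onI) (auto simp: layer_words_def intro: join_R_inj)
  assume r: "1 \<le> r"
  show "join_R ` layer_words m n r = words m n r"
  proof
    show "join_R ` layer_words m n r \<subseteq> words m n r"
    proof clarify
      fix ss assume ss: "ss \<in> layer_words m n r"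
      with r have "ss \<noteq> []" by (auto simp: layer_words_def)
      with ss show "join_R ss \<in> words m n r"
        by (simp add: layer_words_def words_def count_join_R count_LR_join_R)
    qed
    show "words m n r \<subseteq> join_R ` layer_words m n r"
    proof
      fix w assume "w \<in> words m n r"
      with r have "split_R w \<in> layer_words m n r" using split_R[of w]
        by (auto simp: layer_words_def words_def)
      then show "w \<in> join_R ` layer_words m n r" using split_R[of w] by force
    qed
  qed
qed

theorem facets_diag_free_sets_words:
  assumes "1 \<le> m" "1 \<le> n" "1 \<le> r"
  shows "bij_betw (join_R \<circ> inv_into (layer_words m n r) (stairs m n 1))
           (facets (diag_free_sets m n r)) (words m n r)"
  using bij_betw_trans[OF bij_betw_inv_into[OF bij_betw_stairs_facets[OF assms]] bij_betw_join_R[OF assms(3)]] .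

lemma term_order_refl: "term_order le \<Longrightarrow> le s s"
  unfolding term_order_def by blast

lemma term_order_antisym: "term_order le \<Longrightarrow> le s t \<Longrightarrow> le t s \<Longrightarrow> s = t"
  unfolding term_order_def by blast

lemma term_order_trans: "term_order le \<Longrightarrow> le s t \<Longrightarrow> le t u \<Longrightarrow> le s u"
  unfolding term_order_def by blast

lemma term_order_linear: "term_order le \<Longrightarrow> le s t \<or> le t s"
  unfolding term_order_def by blast

lemma term_order_add_right: "term_order le \<Longrightarrow> le s t \<Longrightarrow> le (s + u) (t + u)"
  unfolding term_order_def by blast

lemma term_order_wf: "term_order le \<Longrightarrow> wfP (\<lambda>s t. le s t \<and> s \<noteq> t)"
  unfolding term_order_def by blast

lemma term_order_greatest_exists:
  "finite A \<Longrightarrow> A \<noteq> {} \<Longrightarrow> term_order le \<Longrightarrow> \<exists>t\<in>A. \<forall>s\<in>A. le s t"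
proof (induction A rule: finite_ne_induct)
  case (singleton x)
  then show ?case by (auto intro: term_order_refl)
next
  case (insert x A)
  then obtain t where t: "t \<in> A" "\<forall>s\<in>A. le s t" by auto
  show ?case
  proof (cases "le x t")
    case True
    with t show ?thesis by auto
  next
    case False
    then have "le t x" using term_order_linear[OF insert.prems] by blast
    with t term_order_trans[OF insert.prems] term_order_refl[OF insert.prems] show ?thesis by blast
  qed
qed

lemma lead_mon_greatest:
  assumes "term_order le" and "f \<noteq> 0"
  shows "lead_mon le f \<in> Poly_Mapping.keys f" and "\<And>s. s \<in> Poly_Mapping.keys f \<Longrightarrow> le s (lead_mon le f)"
proof -
  obtain t where t: "t \<in> Poly_Mapping.keys f" "\<forall>s\<in>Poly_Mapping.keys f. le s t"
    using term_order_greatest_exists[OF finite_keys _ assms(1)] assms(2) by auto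
  have "lead_mon le f = t"
    unfolding lead_mon_def using t term_order_antisym[OF assms(1)] by (intro the_equality) blast+
  with t show "lead_mon le f \<in> Poly_Mapping.keys f" "\<And>s. s \<in> Poly_Mapping.keys f \<Longrightarrow> le s (lead_mon le f)"
    by simp_all
qed

lemma lead_mon_cong_keys: "Poly_Mapping.keys f = Poly_Mapping.keys g \<Longrightarrow> lead_mon le f = lead_mon le g"
  unfolding lead_mon_def by simp

lemma keys_single_diff_single:
  "s \<noteq> t \<Longrightarrow> Poly_Mapping.keys (Poly_Mapping.single s 1 - Poly_Mapping.single t (1::'a::ring_1)) = {s, t}"
  by (auto simp: in_keys_iff lookup_minus lookup_single when_def split: if_splits)

section \<open>The multigrading by row, column and layer indices\<close>

lemma keys_var_mon: "Poly_Mapping.keys (var_mon v) = {v}"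
  by (simp add: var_mon_def)

lemma keys_add_mon: "Poly_Mapping.keys ((s::mon) + t) = Poly_Mapping.keys s \<union> Poly_Mapping.keys t"
  by (auto simp: in_keys_iff lookup_add)

lemma lookup_var_mon_pair:
  "Poly_Mapping.lookup (var_mon x + var_mon y) v = (if x = v then 1 else 0) + (if y = v then 1 else 0)"
  by (simp add: var_mon_def lookup_add lookup_single when_def)

definition mon_mset :: "mon \<Rightarrow> var multiset" where
  "mon_mset t = Abs_multiset (Poly_Mapping.lookup t)"

lemma count_mon_mset: "count (mon_mset t) = Poly_Mapping.lookup t"
proof -
  have "finite {x. 0 < Poly_Mapping.lookup t x}"
    using finite_keys[of t] by (simp add: in_keys_iff[symmetric] Collect_mem_eq)
  then show ?thesis unfolding mon_mset_def by simp
qed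

lemma mon_mset_add: "mon_mset (s + t) = mon_mset s + mon_mset t"
  by (rule multiset_eqI) (simp add: count_mon_mset lookup_add)

lemma mon_mset_inject: "mon_mset s = mon_mset t \<Longrightarrow> s = t"
  by (metis count_mon_mset poly_mapping_eqI)

lemma set_mon_mset: "set_mset (mon_mset t) = Poly_Mapping.keys t"
  by (auto simp: set_mset_def count_mon_mset in_keys_iff)

lemma mon_mset_var_mon: "mon_mset (var_mon v) = {#v#}"
  by (rule multiset_eqI) (simp add: count_mon_mset var_mon_def lookup_single when_def)

definition mset_deg :: "var multiset \<Rightarrow> nat multiset \<times> nat multiset \<times> nat multiset" where
  "mset_deg A = (image_mset row A, image_mset col A, image_mset layer A)"

definition multideg :: "mon \<Rightarrow> nat multiset \<times> nat multiset \<times> nat multiset" where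
  "multideg t = mset_deg (mon_mset t)"

lemma multideg_add_cong: "multideg s = multideg s' \<Longrightarrow> multideg (s + t) = multideg (s' + t)"
  by (simp add: multideg_def mset_deg_def mon_mset_add)

lemma multideg_var_pair:
  "multideg (var_mon x + var_mon y) = ({#row x, row y#}, {#col x, col y#}, {#layer x, layer y#})"
  by (simp add: multideg_def mset_deg_def mon_mset_add mon_mset_var_mon)

definition coeff_sum :: "(mon \<Rightarrow> bool) \<Rightarrow> 'a::comm_ring_1 mpoly \<Rightarrow> 'a" where
  "coeff_sum C f = (\<Sum>t\<in>Poly_Mapping.keys f. if C t then Poly_Mapping.lookup f t else 0)"

lemma coeff_sum_zero [simp]: "coeff_sum C 0 = 0"
  by (simp add: coeff_sum_def)

lemma coeff_sum_add: "coeff_sum C (f + g) = coeff_sum C f + coeff_sum C g"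
  unfolding coeff_sum_def by (rule setsum_keys_plus_distrib) auto

lemma coeff_sum_diff: "coeff_sum C (f - g) = coeff_sum C f - coeff_sum C g"
  using coeff_sum_add[of C "f - g" g] by (simp add: algebra_simps)

lemma coeff_sum_sum: "finite I \<Longrightarrow> coeff_sum C (\<Sum>i\<in>I. g i) = (\<Sum>i\<in>I. coeff_sum C (g i))"
  by (induction I rule: finite_induct) (auto simp: coeff_sum_add)

lemma coeff_sum_single: "coeff_sum C (Poly_Mapping.single t a) = (if C t then a else 0)"
  by (simp add: coeff_sum_def)

lemma mpoly_expand:
  "f = (\<Sum>t\<in>Poly_Mapping.keys f. Poly_Mapping.single t (Poly_Mapping.lookup f t))"
proof (rule poly_mapping_eqI)
  fix k
  have "Poly_Mapping.lookup (\<Sum>t\<in>Poly_Mapping.keys f. Poly_Mapping.single t (Poly_Mapping.lookup f t)) k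
      = (\<Sum>t\<in>Poly_Mapping.keys f. if t = k then Poly_Mapping.lookup f t else 0)"
    by (simp add: lookup_sum lookup_single when_def)
  also have "\<dots> = Poly_Mapping.lookup f k"
    by (simp add: sum.delta' in_keys_iff)
  finally show "Poly_Mapping.lookup f k =
      Poly_Mapping.lookup (\<Sum>t\<in>Poly_Mapping.keys f. Poly_Mapping.single t (Poly_Mapping.lookup f t)) k" ..
qed

lemma coeff_sum_single_mult:
  "coeff_sum C (Poly_Mapping.single s a * f) = a * coeff_sum (\<lambda>t. C (s + t)) (f :: 'a::comm_ring_1 mpoly)"
proof -
  have "Poly_Mapping.single s a * f =
      Poly_Mapping.single s a * (\<Sum>t\<in>Poly_Mapping.keys f. Poly_Mapping.single t (Poly_Mapping.lookup f t))"
    by (rule arg_cong[OF mpoly_expand])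
  also have "\<dots> = (\<Sum>t\<in>Poly_Mapping.keys f. Poly_Mapping.single (s + t) (a * Poly_Mapping.lookup f t))"
    by (simp only: sum_distrib_left mult_single)
  finally have "Poly_Mapping.single s a * f = \<dots>" .
  then have "coeff_sum C (Poly_Mapping.single s a * f) =
      (\<Sum>t\<in>Poly_Mapping.keys f. if C (s + t) then a * Poly_Mapping.lookup f t else 0)"
    by (simp add: coeff_sum_sum coeff_sum_single)
  also have "\<dots> = a * coeff_sum (\<lambda>t. C (s + t)) f"
    unfolding coeff_sum_def sum_distrib_left by (rule sum.cong) auto
  finally show ?thesis .
qed

lemma coeff_sum_mult:
  "coeff_sum C (q * f) =
     (\<Sum>s\<in>Poly_Mapping.keys q. Poly_Mapping.lookup q s * coeff_sum (\<lambda>t. C (s + t)) (f :: 'a::comm_ring_1 mpoly))"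
proof -
  have "q * f = (\<Sum>s\<in>Poly_Mapping.keys q. Poly_Mapping.single s (Poly_Mapping.lookup q s)) * f"
    by (rule arg_cong[OF mpoly_expand])
  also have "\<dots> = (\<Sum>s\<in>Poly_Mapping.keys q. Poly_Mapping.single s (Poly_Mapping.lookup q s) * f)"
    by (rule sum_distrib_right)
  finally show ?thesis by (simp add: coeff_sum_sum coeff_sum_single_mult)
qed

lemma block_index_mod_div:
  "1 \<le> (j::nat) \<Longrightarrow> j \<le> n \<Longrightarrow> 1 \<le> k \<Longrightarrow>
   ((k - 1) * n + j - 1) mod n = j - 1 \<and> ((k - 1) * n + j - 1) div n = k - 1"
proof -
  assume a: "1 \<le> j" "j \<le> n" "1 \<le> k"
  have "(k - 1) * n + j - 1 = (k - 1) * n + (j - 1)" using a by simp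
  also have "\<dots> = (j - 1) + n * (k - 1)" by (simp add: mult.commute)
  finally have e: "(k - 1) * n + j - 1 = (j - 1) + n * (k - 1)" .
  have n: "0 < n" using a by simp
  have "(j - 1) mod n = j - 1" "(j - 1) div n = 0" using a by auto
  then show ?thesis unfolding e using n by simp
qed

lemma Hmat_block: "1 \<le> j \<Longrightarrow> j \<le> n \<Longrightarrow> 1 \<le> k \<Longrightarrow> Hmat m n r a ((k - 1) * n + j) = (a, j, k)"
  using block_index_mod_div[of j n k] by (simp add: Hmat_def)

lemma Vmat_block: "1 \<le> i \<Longrightarrow> i \<le> m \<Longrightarrow> 1 \<le> k \<Longrightarrow> Vmat m n r ((k - 1) * m + i) j = (i, j, k)"
  using block_index_mod_div[of i m k] by (simp add: Vmat_def)

lemma block_index_less: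
  assumes "1 \<le> (j::nat)" "j \<le> n" "1 \<le> j'" "1 \<le> k" "k < k' \<or> k = k' \<and> j < j'"
  shows "(k - 1) * n + j < (k' - 1) * n + j'"
proof (cases "k < k'")
  case True
  have "(k - 1) * n + j \<le> (k - 1) * n + n" using assms by simp
  also have "\<dots> = k * n" using assms by (cases k) auto
  also have "\<dots> \<le> (k' - 1) * n" using True by (intro mult_le_mono1) simp
  finally show ?thesis using assms by simp
next
  case False
  with assms show ?thesis by simp
qed

lemma block_index_le: "1 \<le> (k::nat) \<Longrightarrow> k \<le> r \<Longrightarrow> j \<le> n \<Longrightarrow> (k - 1) * n + j \<le> n * r"
proof -
  assume a: "1 \<le> k" "k \<le> r" "j \<le> n"
  have "(k - 1) * n + j \<le> (k - 1) * n + n" using a by simp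
  also have "\<dots> = k * n" using a by (cases k) auto
  also have "\<dots> \<le> r * n" using a by simp
  finally show ?thesis by (simp add: mult.commute)
qed

lemma block_index_inj:
  "0 < (n::nat) \<Longrightarrow> 1 \<le> c \<Longrightarrow> 1 \<le> d \<Longrightarrow> (c - 1) mod n = (d - 1) mod n \<Longrightarrow>
   (c - 1) div n = (d - 1) div n \<Longrightarrow> c = d"
proof -
  assume h: "0 < n" "1 \<le> c" "1 \<le> d" "(c - 1) mod n = (d - 1) mod n" "(c - 1) div n = (d - 1) div n"
  have "c - 1 = (c - 1) div n * n + (c - 1) mod n" by simp
  also have "\<dots> = d - 1" using h by simp
  finally show "c = d" using h by simp
qed

lemma Hmat_in_varset:
  "0 < n \<Longrightarrow> 1 \<le> a \<Longrightarrow> a \<le> m \<Longrightarrow> 1 \<le> c \<Longrightarrow> c \<le> n * r \<Longrightarrow> Hmat m n r a c \<in> varset m n r"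
proof -
  assume h: "0 < n" "1 \<le> a" "a \<le> m" "1 \<le> c" "c \<le> n * r"
  then have "(c - 1) div n < r" by (simp add: div_less_iff_less_mult mult.commute)
  with h show ?thesis by (simp add: Hmat_def varset_def Suc_le_eq)
qed

lemma Vmat_in_varset:
  "0 < m \<Longrightarrow> 1 \<le> a \<Longrightarrow> a \<le> m * r \<Longrightarrow> 1 \<le> c \<Longrightarrow> c \<le> n \<Longrightarrow> Vmat m n r a c \<in> varset m n r"
proof -
  assume h: "0 < m" "1 \<le> a" "a \<le> m * r" "1 \<le> c" "c \<le> n"
  then have "(a - 1) div m < r" by (simp add: div_less_iff_less_mult mult.commute)
  with h show ?thesis by (simp add: Vmat_def varset_def Suc_le_eq)
qed

definition is_minor :: "nat \<Rightarrow> nat \<Rightarrow> nat \<Rightarrow> (nat \<Rightarrow> nat \<Rightarrow> var) \<Rightarrow> nat \<Rightarrow> nat \<Rightarrow> nat \<Rightarrow> nat \<Rightarrow> bool" where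
  "is_minor m n r X a b c d \<longleftrightarrow>
     (X = Hmat m n r \<and> (a,b,c,d) \<in> minor_idx m (n*r)) \<or> (X = Vmat m n r \<and> (a,b,c,d) \<in> minor_idx (m*r) n)"

lemma minor2_in_generators:
  "is_minor m n r X a b c d \<Longrightarrow> minor2 X a b c d \<in> minors_H m n r \<union> minors_V m n r"
  by (auto simp: minors_H_def minors_V_def is_minor_def)

lemma generator_is_minor:
  "g \<in> minors_H m n r \<union> minors_V m n r \<Longrightarrow> \<exists>X a b c d. is_minor m n r X a b c d \<and> g = minor2 X a b c d"
  unfolding minors_H_def minors_V_def is_minor_def by blast

lemma diag_pair_is_minor:
  assumes "0 < m" "0 < n" "p \<in> varset m n r" "q \<in> varset m n r" "diag_pair p q"
  shows "\<exists>X a b c d. is_minor m n r X a b c d \<and> X a c = p \<and> X b d = q"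
proof -
  obtain i j k i' j' k' where pq: "p = (i,j,k)" "q = (i',j',k')" by (cases p, cases q) auto
  have b: "1 \<le> i" "i \<le> m" "1 \<le> j" "j \<le> n" "1 \<le> k" "k \<le> r"
          "1 \<le> i'" "i' \<le> m" "1 \<le> j'" "j' \<le> n" "1 \<le> k'" "k' \<le> r"
    using assms(3,4) pq by (auto simp: varset_def)
  show ?thesis
  proof (cases "i < i' \<and> (k < k' \<or> k = k' \<and> j < j')")
    case True
    let ?c = "(k - 1) * n + j" and ?d = "(k' - 1) * n + j'"
    have "?c < ?d" using block_index_less[of j n j' k k'] b True by simp
    moreover have "?d \<le> n * r" using block_index_le[of k' r j' n] b by simp
    ultimately have "is_minor m n r (Hmat m n r) i i' ?c ?d"
      using True b by (simp add: is_minor_def minor_idx_def)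
    moreover have "Hmat m n r i ?c = p" "Hmat m n r i' ?d = q"
      using Hmat_block b pq by auto
    ultimately show ?thesis by blast
  next
    case False
    with assms(5) pq have F: "(k < k' \<or> k = k' \<and> i < i') \<and> j < j'" by auto
    let ?a = "(k - 1) * m + i" and ?b = "(k' - 1) * m + i'"
    have "?a < ?b" using block_index_less[of i m i' k k'] b F by simp
    moreover have "?b \<le> m * r" using block_index_le[of k' r i' m] b by simp
    ultimately have "is_minor m n r (Vmat m n r) ?a ?b j j'"
      using F b by (simp add: is_minor_def minor_idx_def)
    moreover have "Vmat m n r ?a j = p" "Vmat m n r ?b j' = q"
      using Vmat_block b pq by auto
    ultimately show ?thesis by blast
  qed
qed

lemma is_minor_entries:
  assumes "0 < m" "0 < n" "is_minor m n r X a b c d"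
  shows "{X a c, X b d, X a d, X b c} \<subseteq> varset m n r \<and> X a c \<noteq> X a d \<and> X a c \<noteq> X b c"
  using assms(3) unfolding is_minor_def
proof (elim disjE conjE)
  assume X: "X = Hmat m n r" and "(a,b,c,d) \<in> minor_idx m (n*r)"
  then have i: "1 \<le> a" "a < b" "b \<le> m" "1 \<le> c" "c < d" "d \<le> n * r" by (auto simp: minor_idx_def)
  have "X a c \<noteq> X a d" using block_index_inj[OF assms(2), of c d] i X by (auto simp: Hmat_def)
  moreover have "X a c \<noteq> X b c" using i X by (simp add: Hmat_def)
  ultimately show ?thesis using X i Hmat_in_varset[OF assms(2)] by auto
next
  assume X: "X = Vmat m n r" and "(a,b,c,d) \<in> minor_idx (m*r) n"
  then have i: "1 \<le> a" "a < b" "b \<le> m * r" "1 \<le> c" "c < d" "d \<le> n" by (auto simp: minor_idx_def)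
  have "X a c \<noteq> X a d" using i X by (simp add: Vmat_def)
  moreover have "X a c \<noteq> X b c" using block_index_inj[OF assms(1), of a b] i X by (auto simp: Vmat_def)
  ultimately show ?thesis using X i Vmat_in_varset[OF assms(1)] by auto
qed

lemma multideg_antidiag_mon:
  "is_minor m n r X a b c d \<Longrightarrow> multideg (antidiag_mon X a b c d) = multideg (diag_mon X a b c d)"
  unfolding is_minor_def diag_mon_def antidiag_mon_def multideg_var_pair
  by (auto simp: Hmat_def Vmat_def add_mset_commute)

lemma diag_mon_ne_antidiag_mon:
  assumes "0 < m" "0 < n" "is_minor m n r X a b c d"
  shows "diag_mon X a b c d \<noteq> antidiag_mon X a b c d"
proof
  assume "diag_mon X a b c d = antidiag_mon X a b c d"
  then have "Poly_Mapping.lookup (diag_mon X a b c d) (X a c) = Poly_Mapping.lookup (antidiag_mon X a b c d) (X a c)"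
    by simp
  with is_minor_entries[OF assms] show False
    by (auto simp: diag_mon_def antidiag_mon_def lookup_var_mon_pair split: if_splits)
qed

lemma keys_minor2:
  "0 < m \<Longrightarrow> 0 < n \<Longrightarrow> is_minor m n r X a b c d \<Longrightarrow>
   Poly_Mapping.keys (minor2 X a b c d :: 'a::field mpoly) = {diag_mon X a b c d, antidiag_mon X a b c d}"
  unfolding minor2_def by (rule keys_single_diff_single[OF diag_mon_ne_antidiag_mon])

text \<open>The hypothesis \<open>diagonal_order\<close> speaks about minors over \<open>\<rat>\<close>; the leading monomial
  only depends on the support, which is the same over every field.\<close>
lemma lead_mon_minor2:
  assumes "0 < m" "0 < n" "is_minor m n r X a b c d" "diagonal_order m n r le"
  shows "lead_mon le (minor2 X a b c d :: 'a::field mpoly) = diag_mon X a b c d"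
proof -
  have "lead_mon le (minor2 X a b c d :: 'a mpoly) = lead_mon le (minor2 X a b c d :: rat mpoly)"
    by (rule lead_mon_cong_keys) (simp add: keys_minor2[OF assms(1-3)])
  also have "\<dots> = diag_mon X a b c d"
    using assms(3,4) unfolding is_minor_def diagonal_order_def by auto
  finally show ?thesis .
qed

lemma antidiag_mon_le_diag_mon:
  assumes "0 < m" "0 < n" "is_minor m n r X a b c d" "term_order le" "diagonal_order m n r le"
  shows "le (antidiag_mon X a b c d) (diag_mon X a b c d)"
proof -
  have keys: "Poly_Mapping.keys (minor2 X a b c d :: rat mpoly) = {diag_mon X a b c d, antidiag_mon X a b c d}"
    by (rule keys_minor2[OF assms(1-3)])
  then have "minor2 X a b c d \<noteq> (0 :: rat mpoly)" by auto
  from lead_mon_greatest(2)[OF assms(4) this] keys lead_mon_minor2[OF assms(1-3,5), where 'a = rat]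
  show ?thesis by auto
qed

definition in_vars :: "nat \<Rightarrow> nat \<Rightarrow> nat \<Rightarrow> mon \<Rightarrow> bool" where
  "in_vars m n r t \<longleftrightarrow> Poly_Mapping.keys t \<subseteq> varset m n r"

lemma in_vars_add: "in_vars m n r (s + t) \<longleftrightarrow> in_vars m n r s \<and> in_vars m n r t"
  by (auto simp: in_vars_def keys_add_mon)

lemma in_vars_var_pair: "x \<in> varset m n r \<Longrightarrow> y \<in> varset m n r \<Longrightarrow> in_vars m n r (var_mon x + var_mon y)"
  by (simp add: in_vars_def keys_add_mon keys_var_mon)

text \<open>The shift by \<open>d\<close> makes the property stable under multiplication by monomials.\<close>
definition multideg_balanced :: "nat \<Rightarrow> nat \<Rightarrow> nat \<Rightarrow> 'a::comm_ring_1 mpoly \<Rightarrow> bool" where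
  "multideg_balanced m n r f \<longleftrightarrow> (\<forall>d D. coeff_sum (\<lambda>t. in_vars m n r t \<and> multideg (t + d) = D) f = 0)"

lemma multideg_balanced_add:
  "multideg_balanced m n r f \<Longrightarrow> multideg_balanced m n r g \<Longrightarrow> multideg_balanced m n r (f + g)"
  by (simp add: multideg_balanced_def coeff_sum_add)

lemma multideg_balanced_mult:
  assumes q: "q \<in> ring_R m n r" and f: "multideg_balanced m n r f"
  shows "multideg_balanced m n r (q * f)"
  unfolding multideg_balanced_def
proof (intro allI)
  fix d D
  have "coeff_sum (\<lambda>t. in_vars m n r (s + t) \<and> multideg (s + t + d) = D) f = 0"
    if "s \<in> Poly_Mapping.keys q" for s
  proof -
    from that q have "in_vars m n r s" by (auto simp: ring_R_def in_vars_def)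
    then have "(\<lambda>t. in_vars m n r (s + t) \<and> multideg (s + t + d) = D) =
               (\<lambda>t. in_vars m n r t \<and> multideg (t + (s + d)) = D)"
      by (auto simp: in_vars_add add_ac fun_eq_iff)
    moreover have "coeff_sum (\<lambda>t. in_vars m n r t \<and> multideg (t + (s + d)) = D) f = 0"
      using f unfolding multideg_balanced_def by blast
    ultimately show ?thesis by simp
  qed
  then show "coeff_sum (\<lambda>t. in_vars m n r t \<and> multideg (t + d) = D) (q * f) = 0"
    by (simp add: coeff_sum_mult)
qed

lemma multideg_balanced_minor2:
  assumes "0 < m" "0 < n" "is_minor m n r X a b c d"
  shows "multideg_balanced m n r (minor2 X a b c d)"
  unfolding multideg_balanced_def
proof (intro allI)
  fix e D
  have "in_vars m n r (diag_mon X a b c d)" "in_vars m n r (antidiag_mon X a b c d)"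
    using is_minor_entries[OF assms] by (simp_all add: diag_mon_def antidiag_mon_def in_vars_var_pair)
  moreover have "multideg (antidiag_mon X a b c d + e) = multideg (diag_mon X a b c d + e)"
    using multideg_antidiag_mon[OF assms(3)] by (rule multideg_add_cong)
  ultimately show "coeff_sum (\<lambda>t. in_vars m n r t \<and> multideg (t + e) = D) (minor2 X a b c d) = 0"
    by (simp add: minor2_def coeff_sum_diff coeff_sum_single)
qed

lemma multideg_balanced_I_mnr:
  assumes "0 < m" "0 < n" and "f \<in> I_mnr m n r"
  shows "multideg_balanced m n r f"
  using assms(3) unfolding I_mnr_def
proof (induction rule: ideal_gen.induct)
  case zero
  then show ?case by (simp add: multideg_balanced_def)
next
  case (gen g)
  then show ?case using generator_is_minor multideg_balanced_minor2[OF assms(1,2)] by blast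
next
  case (add f h)
  from add.IH show ?case by (rule multideg_balanced_add)
next
  case (mult f q)
  then show ?case by (intro multideg_balanced_mult)
qed

section \<open>Diagonal-free monomials\<close>

text \<open>In a diagonal-free multiset of variables the top layer \<open>Max K\<close> holds the \<open>count K (Max K)\<close>
  smallest rows, since lower layers lie weakly south-east of higher ones. The pivot is the variable of
  the top layer with the largest of these rows and, among those, the smallest column, which is also
  the smallest column overall.\<close>
definition pivot :: "nat multiset \<times> nat multiset \<times> nat multiset \<Rightarrow> var" where
  "pivot D = (case D of (I, J, K) \<Rightarrow>
     ((LEAST x. count K (Max (set_mset K)) \<le> size (filter_mset (\<lambda>i. i \<le> x) I)),
      Min (set_mset J), Max (set_mset K)))"

lemma top_layer_nonempty: "A \<noteq> {#} \<Longrightarrow> filter_mset (\<lambda>p. layer p = Max (layer ` set_mset A)) A \<noteq> {#}"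
proof -
  assume "A \<noteq> {#}"
  then have "Max (layer ` set_mset A) \<in> layer ` set_mset A" by simp
  then obtain p where "p \<in># A" "layer p = Max (layer ` set_mset A)" by auto
  then show ?thesis by (metis (mono_tags) filter_mset_eq_mempty_iff)
qed

lemma top_layer_row_rank:
  fixes A :: "var multiset"
  defines "T \<equiv> filter_mset (\<lambda>p. layer p = Max (layer ` set_mset A)) A"
  assumes free: "diag_free (set_mset A)" and ne: "A \<noteq> {#}"
  shows "(LEAST x. size T \<le> size (filter_mset (\<lambda>p. row p \<le> x) A)) = Max (row ` set_mset T)"
proof -
  define top where "top = Max (layer ` set_mset A)"
  define imax where "imax = Max (row ` set_mset T)"
  have "T \<noteq> {#}" unfolding T_def by (rule top_layer_nonempty[OF ne])
  then have "imax \<in> row ` set_mset T" unfolding imax_def by simp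
  then obtain e0 where e0: "e0 \<in># T" "row e0 = imax" by auto
  have imax_ge: "row p \<le> imax" if "p \<in># T" for p
    unfolding imax_def using that by simp
  have e0_A: "e0 \<in># A" and e0_top: "layer e0 = top" using e0(1) by (simp_all add: T_def top_def)
  have in_T: "p \<in># T" if p: "p \<in># A" "row p < imax" for p
  proof (rule ccontr)
    assume "p \<notin># T"
    with p(1) have "layer p \<noteq> top" by (simp add: T_def top_def)
    moreover have "layer p \<le> top" using p(1) unfolding top_def by simp
    ultimately have "layer p < layer e0" using e0_top by simp
    with diag_free_layer_less[OF free p(1) e0_A] e0(2) p(2) show False by simp
  qed
  show ?thesis unfolding imax_def[symmetric]
  proof (rule Least_equality)
    have "T \<subseteq># filter_mset (\<lambda>p. row p \<le> imax) A"
      unfolding T_def by (rule filter_mset_mono_strong[OF subset_mset.refl]) (use imax_ge T_def in auto)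
    then show "size T \<le> size (filter_mset (\<lambda>p. row p \<le> imax) A)" by (rule size_mset_mono)
  next
    fix y assume y: "size T \<le> size (filter_mset (\<lambda>p. row p \<le> y) A)"
    show "imax \<le> y"
    proof (rule ccontr)
      assume "\<not> imax \<le> y"
      then have "filter_mset (\<lambda>p. row p \<le> y) A \<subseteq># filter_mset (\<lambda>p. row p \<noteq> imax) T"
        unfolding T_def filter_filter_mset
        by (intro filter_mset_mono_strong[OF subset_mset.refl]) (use in_T in \<open>auto simp: T_def\<close>)
      moreover have "filter_mset (\<lambda>p. row p \<noteq> imax) T \<subset># T"
      proof (rule subset_mset.le_neq_trans[OF multiset_filter_subset])
        have "e0 \<notin># filter_mset (\<lambda>p. row p \<noteq> imax) T" using e0(2) by simp
        with e0(1) show "filter_mset (\<lambda>p. row p \<noteq> imax) T \<noteq> T" by metis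
      qed
      ultimately have "size (filter_mset (\<lambda>p. row p \<le> y) A) < size T"
        using size_mset_mono mset_subset_size le_less_trans by blast
      with y show False by simp
    qed
  qed
qed

lemma top_layer_min_col:
  fixes A :: "var multiset"
  defines "T \<equiv> filter_mset (\<lambda>p. layer p = Max (layer ` set_mset A)) A"
  assumes free: "diag_free (set_mset A)" and ne: "A \<noteq> {#}"
  shows "\<exists>e\<in>#T. row e = Max (row ` set_mset T) \<and> col e = Min (col ` set_mset A)"
proof -
  define top where "top = Max (layer ` set_mset A)"
  define imax where "imax = Max (row ` set_mset T)"
  define E where "E = filter_mset (\<lambda>p. row p = imax) T"
  have "T \<noteq> {#}" unfolding T_def by (rule top_layer_nonempty[OF ne])
  then have "imax \<in> row ` set_mset T" unfolding imax_def by simp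
  then obtain q where "q \<in># T" "row q = imax" by blast
  then have "q \<in># E" by (simp add: E_def)
  then have "E \<noteq> {#}" by auto
  then have "Min (col ` set_mset E) \<in> col ` set_mset E" by (intro Min_in) auto
  then obtain e where e: "e \<in># E" "col e = Min (col ` set_mset E)" by auto
  then have e_T: "e \<in># T" and e_A: "e \<in># A" and e_row: "row e = imax" and e_top: "layer e = top"
    by (simp_all add: E_def T_def top_def)
  have "col e \<le> col q" if q: "q \<in># A" for q
  proof (cases "layer q = top")
    case False
    moreover have "layer q \<le> top" using q unfolding top_def by simp
    ultimately show ?thesis using diag_free_layer_less[OF free q e_A] e_top by simp
  next
    case True
    then have q_T: "q \<in># T" using q by (simp add: T_def top_def)
    show ?thesis
    proof (cases "row q = imax")
      case True
      with q_T have "q \<in># E" by (simp add: E_def)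
      with e(2) show ?thesis by simp
    next
      case False
      with q_T have "row q < row e" unfolding e_row imax_def by (simp add: order.strict_iff_order)
      with diag_free_same_layer[OF free q e_A] \<open>layer q = top\<close> e_top show ?thesis by auto
    qed
  qed
  with e_A have "Min (col ` set_mset A) = col e" by (intro Min_eqI) auto
  with e_T e_row show ?thesis unfolding imax_def by auto
qed

lemma count_image_mset_eq_size_filter:
  "count (image_mset f A) x = size (filter_mset (\<lambda>p. f p = x) A)"
proof -
  have "count (image_mset f A) x = size (filter_mset (\<lambda>y. y = x) (image_mset f A))"
    by (simp add: filter_eq_replicate_mset)
  then show ?thesis by (simp add: filter_mset_image_mset)
qed

lemma pivot_in:
  assumes "diag_free (set_mset A)" "A \<noteq> {#}"
  shows "pivot (mset_deg A) \<in># A"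
proof -
  define T where "T = filter_mset (\<lambda>p. layer p = Max (layer ` set_mset A)) A"
  obtain e where e: "e \<in># T" "row e = Max (row ` set_mset T)" "col e = Min (col ` set_mset A)"
    using top_layer_min_col[OF assms] unfolding T_def by blast
  have "pivot (mset_deg A) =
      ((LEAST x. size T \<le> size (filter_mset (\<lambda>p. row p \<le> x) A)), Min (col ` set_mset A),
       Max (layer ` set_mset A))"
    by (simp add: pivot_def mset_deg_def T_def count_image_mset_eq_size_filter filter_mset_image_mset)
  also have "\<dots> = e"
    using top_layer_row_rank[OF assms] e by (simp add: T_def prod_eq_iff)
  finally show ?thesis using e(1) by (simp add: T_def)
qed

lemma diag_free_mset_unique:
  "diag_free (set_mset A) \<Longrightarrow> diag_free (set_mset B) \<Longrightarrow> mset_deg A = mset_deg B \<Longrightarrow> A = B"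
proof (induction "size A" arbitrary: A B rule: less_induct)
  case less
  show ?case
  proof (cases "A = {#}")
    case True
    with less.prems(3) show ?thesis by (simp add: mset_deg_def)
  next
    case False
    with less.prems(3) have "B \<noteq> {#}" by (auto simp: mset_deg_def)
    define e where "e = pivot (mset_deg A)"
    have eA: "e \<in># A" using pivot_in[OF less.prems(1) False] by (simp add: e_def)
    have eB: "e \<in># B" using pivot_in[OF less.prems(2) \<open>B \<noteq> {#}\<close>] less.prems(3) by (simp add: e_def)
    have "A - {#e#} = B - {#e#}"
    proof (rule less.hyps)
      show "size (A - {#e#}) < size A" using eA by (rule size_Diff1_less)
      show "diag_free (set_mset (A - {#e#}))" "diag_free (set_mset (B - {#e#}))"
        using less.prems(1,2) diag_free_subset in_diffD by (metis subsetI)+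
      show "mset_deg (A - {#e#}) = mset_deg (B - {#e#})"
        using less.prems(3) eA eB by (simp add: mset_deg_def image_mset_Diff)
    qed
    with eA eB show ?thesis by (metis insert_DiffM)
  qed
qed

lemma diag_exchange:
  assumes "0 < m" "0 < n" "term_order le" "diagonal_order m n r le"
    and t: "in_vars m n r t" and not_free: "\<not> diag_free (Poly_Mapping.keys t)"
  obtains t' where "in_vars m n r t'" "multideg t' = multideg t" "le t' t" "t' \<noteq> t"
proof -
  obtain p q where pq: "p \<in> Poly_Mapping.keys t" "q \<in> Poly_Mapping.keys t" "diag_pair p q"
    using not_free unfolding diag_free_def by blast
  with t have "p \<in> varset m n r" "q \<in> varset m n r" by (auto simp: in_vars_def)
  with diag_pair_is_minor[OF assms(1,2) _ _ pq(3)] obtain X a b c d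
    where M: "is_minor m n r X a b c d" and Xp: "X a c = p" and Xq: "X b d = q" by blast
  define D where "D = diag_mon X a b c d"
  define A where "A = antidiag_mon X a b c d"
  have "p \<noteq> q" using pq(3) not_diag_pair_refl by blast
  then have "Poly_Mapping.lookup D v \<le> Poly_Mapping.lookup t v" for v
    using pq(1,2) by (auto simp: D_def diag_mon_def Xp Xq lookup_var_mon_pair in_keys_iff)
  then have t_eq: "t = D + (t - D)"
    by (intro poly_mapping_eqI) (simp add: lookup_add lookup_minus)
  show ?thesis
  proof (rule that)
    have "in_vars m n r A"
      using is_minor_entries[OF assms(1,2) M] by (simp add: A_def antidiag_mon_def in_vars_var_pair)
    moreover have "in_vars m n r (t - D)" using t t_eq in_vars_add by metis
    ultimately show "in_vars m n r (A + (t - D))" by (simp add: in_vars_add)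
    show "multideg (A + (t - D)) = multideg t"
      using multideg_antidiag_mon[OF M] t_eq by (metis A_def D_def multideg_add_cong)
    show "le (A + (t - D)) t"
      using antidiag_mon_le_diag_mon[OF assms(1,2) M assms(3,4)] t_eq
      by (metis A_def D_def assms(3) term_order_add_right)
    show "A + (t - D) \<noteq> t"
      using diag_mon_ne_antidiag_mon[OF assms(1,2) M] t_eq by (metis A_def D_def add_right_cancel)
  qed
qed

lemma exists_diag_free_below:
  assumes "0 < m" "0 < n" "term_order le" "diagonal_order m n r le"
  shows "in_vars m n r t \<Longrightarrow>
    \<exists>t'. in_vars m n r t' \<and> multideg t' = multideg t \<and> diag_free (Poly_Mapping.keys t') \<and> le t' t"
proof (induction t rule: wfp_induct_rule[OF term_order_wf[OF assms(3)]])
  case (1 t)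
  show ?case
  proof (cases "diag_free (Poly_Mapping.keys t)")
    case True
    with 1 show ?thesis using term_order_refl[OF assms(3)] by blast
  next
    case False
    with diag_exchange[OF assms "1.prems"] obtain t' where
      t': "in_vars m n r t'" "multideg t' = multideg t" "le t' t" "t' \<noteq> t" by blast
    with "1.IH" obtain t'' where
      "in_vars m n r t''" "multideg t'' = multideg t" "diag_free (Poly_Mapping.keys t'')" "le t'' t'"
      by fastforce
    with t'(3) term_order_trans[OF assms(3)] show ?thesis by blast
  qed
qed

lemma diag_free_least:
  assumes "0 < m" "0 < n" "term_order le" "diagonal_order m n r le"
    and "in_vars m n r L" "diag_free (Poly_Mapping.keys L)"
    and "in_vars m n r t" "multideg t = multideg L"
  shows "le L t"
proof -
  obtain t' where t': "multideg t' = multideg t" "diag_free (Poly_Mapping.keys t')" "le t' t"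
    using exists_diag_free_below[OF assms(1-4,7)] by blast
  have "mon_mset t' = mon_mset L"
    using diag_free_mset_unique[of "mon_mset t'" "mon_mset L"] t' assms(6,8)
    by (simp add: set_mon_mset multideg_def)
  with t'(3) show ?thesis by (metis mon_mset_inject)
qed

text \<open>By \<open>diag_free_least\<close>, a diagonal-free leading monomial would be the only monomial of \<open>f\<close>
  in its multidegree, so the vanishing coefficient sum of that multidegree would be its coefficient.\<close>
lemma lead_mon_I_mnr_not_diag_free:
  fixes f :: "'a::field mpoly"
  assumes mn: "0 < m" "0 < n" and to: "term_order le" and dgo: "diagonal_order m n r le"
    and f: "f \<in> I_mnr m n r" "f \<noteq> 0" and L: "in_vars m n r (lead_mon le f)"
  shows "\<not> diag_free (Poly_Mapping.keys (lead_mon le f))"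
proof
  define L where "L = lead_mon le f"
  assume "diag_free (Poly_Mapping.keys (lead_mon le f))"
  then have "le L t" if "t \<in> Poly_Mapping.keys f" "in_vars m n r t" "multideg t = multideg L" for t
    using diag_free_least[OF mn to dgo L] that by (simp add: L_def)
  then have "t = L" if "t \<in> Poly_Mapping.keys f" "in_vars m n r t" "multideg t = multideg L" for t
    using that lead_mon_greatest(2)[OF to f(2)] term_order_antisym[OF to] by (fastforce simp: L_def)
  then have "coeff_sum (\<lambda>t. in_vars m n r t \<and> multideg (t + 0) = multideg L) f =
      (\<Sum>t\<in>Poly_Mapping.keys f. if t = L then Poly_Mapping.lookup f t else 0)"
    unfolding coeff_sum_def using L by (intro sum.cong) (auto simp: L_def)
  also have "\<dots> = Poly_Mapping.lookup f L"
    using lead_mon_greatest(1)[OF to f(2)] by (simp add: L_def)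
  finally have "Poly_Mapping.lookup f L = 0"
    using multideg_balanced_I_mnr[OF mn f(1)] unfolding multideg_balanced_def by metis
  with lead_mon_greatest(1)[OF to f(2)] show False by (simp add: L_def in_keys_iff)
qed

section \<open>The Stanley--Reisner complex\<close>

lemma keys_sqfree_mon: "finite F \<Longrightarrow> Poly_Mapping.keys (sqfree_mon F) \<subseteq> F"
proof (induction F rule: finite_induct)
  case (insert x F)
  then show ?case by (auto simp: sqfree_mon_def keys_add_mon keys_var_mon)
qed (simp add: sqfree_mon_def)

lemma sqfree_mon_split:
  "finite F \<Longrightarrow> p \<in> F \<Longrightarrow> q \<in> F \<Longrightarrow> p \<noteq> q \<Longrightarrow>
   sqfree_mon F = (var_mon p + var_mon q) + sqfree_mon (F - {p, q})"
proof -
  assume h: "finite F" "p \<in> F" "q \<in> F" "p \<noteq> q"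
  have "sqfree_mon F = var_mon p + (\<Sum>v\<in>F - {p}. var_mon v)"
    unfolding sqfree_mon_def using h by (simp add: sum.remove)
  also have "(\<Sum>v\<in>F - {p}. var_mon v) = var_mon q + (\<Sum>v\<in>F - {p} - {q}. var_mon v)"
    using h by (simp add: sum.remove)
  also have "F - {p} - {q} = F - {p, q}" by auto
  finally show ?thesis by (simp add: sqfree_mon_def add.assoc)
qed

lemma sqfree_mon_in_init_mons:
  assumes "0 < m" "0 < n" "diagonal_order m n r le"
    and F: "F \<subseteq> varset m n r" and not_free: "\<not> diag_free F"
  shows "sqfree_mon F \<in> init_mons m n r le (I_mnr m n r :: 'a::field mpoly set)"
proof -
  obtain p q where pq: "p \<in> F" "q \<in> F" "diag_pair p q" using not_free unfolding diag_free_def by blast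
  with F diag_pair_is_minor[OF assms(1,2)] obtain X a b c d
    where M: "is_minor m n r X a b c d" and Xp: "X a c = p" and Xq: "X b d = q" by blast
  let ?g = "minor2 X a b c d :: 'a mpoly"
  have "?g \<in> I_mnr m n r" unfolding I_mnr_def using minor2_in_generators[OF M] by (rule ideal_gen.gen)
  moreover have "?g \<noteq> 0" using keys_minor2[OF assms(1,2) M, where 'a = 'a] by auto
  moreover have "lead_mon le ?g = var_mon p + var_mon q"
    using lead_mon_minor2[OF assms(1,2) M assms(3)] by (simp add: diag_mon_def Xp Xq)
  moreover have "finite F" using F finite_varset finite_subset by blast
  moreover have "p \<noteq> q" using pq(3) not_diag_pair_refl by blast
  ultimately show ?thesis
    using sqfree_mon_split[of F p q] keys_sqfree_mon[of F] pq F unfolding init_mons_def by fastforce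
qed

lemma sqfree_mon_notin_init_mons:
  assumes "0 < m" "0 < n" "term_order le" "diagonal_order m n r le"
    and F: "F \<subseteq> varset m n r" and free: "diag_free F"
  shows "sqfree_mon F \<notin> init_mons m n r le (I_mnr m n r :: 'a::field mpoly set)"
proof
  assume "sqfree_mon F \<in> init_mons m n r le (I_mnr m n r :: 'a mpoly set)"
  then obtain f :: "'a mpoly" and u where f: "f \<in> I_mnr m n r" "f \<noteq> 0"
    and split: "sqfree_mon F = lead_mon le f + u" unfolding init_mons_def by blast
  have "finite F" using F finite_varset finite_subset by blast
  then have "Poly_Mapping.keys (lead_mon le f) \<subseteq> F"
    using keys_sqfree_mon[of F] split by (auto simp: keys_add_mon)
  with F free have "in_vars m n r (lead_mon le f)" "diag_free (Poly_Mapping.keys (lead_mon le f))"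
    by (auto simp: in_vars_def intro: diag_free_subset)
  with lead_mon_I_mnr_not_diag_free[OF assms(1-4) f] show False by blast
qed

lemma SR_complex_eq_diag_free_sets:
  assumes "0 < m" "0 < n" "term_order le" "diagonal_order m n r le"
  shows "SR_complex m n r le (I_mnr m n r :: 'a::field mpoly set) = diag_free_sets m n r"
  unfolding SR_complex_def diag_free_sets_def
  using sqfree_mon_in_init_mons[OF assms(1,2,4), where 'a = 'a]
    sqfree_mon_notin_init_mons[OF assms, where 'a = 'a] by blast

theorem proposition5p7:
  fixes m n r :: nat and le :: "mon \<Rightarrow> mon \<Rightarrow> bool"
  assumes "0 < m" "0 < n" "0 < r"
    and "term_order le" and "diagonal_order m n r le"
  shows "\<exists>f. bij_betw f
           (facets (SR_complex m n r le (I_mnr m n r :: ('a::field) mpoly set)))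
           (words m n r)"
proof -
  have "1 \<le> m" "1 \<le> n" "1 \<le> r" using assms(1-3) by simp_all
  from facets_diag_free_sets_words[OF this] show ?thesis
    unfolding SR_complex_eq_diag_free_sets[OF assms(1,2,4,5)] by blast
qed

end
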